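(* Let $(R,d,P)$ be a commutative differential Rota–Baxter algebra of weight $\lambda$ over a commutative ring $\mathbf{k}$. For $u,v\in R$ put $\phi(u,v):=P(d(u)P(v))-uP(v)+P(uv)+\lambda P(d(u)v)$. Then for all $u,v,w\in R$: (1) $d(\phi(u,v))=0$; (2) $\phi(u,v)P(w)=P(\phi(u,v)w)+\phi(u,wP(v))+\phi(u,vP(w))+\lambda\,\phi(u,vw)$.
   Context: A commutative differential Rota–Baxter algebra of weight $\lambda\in\mathbf{k}$ is a commutative $\mathbf{k}$-algebra $R$ with linear maps $d,P:R\to R$ such that $d(1)=0$, $d(uv)=d(u)v+ud(v)+\lambda d(u)d(v)$, $P(u)P(v)=P(uP(v))+P(P(u)v)+\lambda P(uv)$, and $d\circ P=\mathrm{id}_R$. *)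

theory Defs
  imports Main
begin

text \<open>A commutative k-algebra R is modelled as a commutative ring 'a together with
  a unital ring homomorphism iota : k -> R (the structure map); the scalar action
  is c . u = iota c * u.\<close>

definition algebra_map :: "('k::comm_ring_1 \<Rightarrow> 'a::comm_ring_1) \<Rightarrow> bool" where
  "algebra_map iota \<longleftrightarrow> iota 1 = 1 \<and> (\<forall>x y. iota (x + y) = iota x + iota y)
     \<and> (\<forall>x y. iota (x * y) = iota x * iota y)"

definition k_linear :: "('k::comm_ring_1 \<Rightarrow> 'a::comm_ring_1) \<Rightarrow> ('a \<Rightarrow> 'a) \<Rightarrow> bool" where
  "k_linear iota f \<longleftrightarrow> (\<forall>u v. f (u + v) = f u + f v) \<and> (\<forall>c u. f (iota c * u) = iota c * f u)"

definition diff_RB_algebra ::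
  "('k::comm_ring_1 \<Rightarrow> 'a::comm_ring_1) \<Rightarrow> 'k \<Rightarrow> ('a \<Rightarrow> 'a) \<Rightarrow> ('a \<Rightarrow> 'a) \<Rightarrow> bool" where
  "diff_RB_algebra iota lam d P \<longleftrightarrow>
     algebra_map iota \<and> k_linear iota d \<and> k_linear iota P \<and>
     d 1 = 0 \<and>
     (\<forall>u v. d (u * v) = d u * v + u * d v + iota lam * (d u * d v)) \<and>
     (\<forall>u v. P u * P v = P (u * P v) + P (P u * v) + iota lam * P (u * v)) \<and>
     (\<forall>u. d (P u) = u)"

definition phi ::
  "('k::comm_ring_1 \<Rightarrow> 'a::comm_ring_1) \<Rightarrow> 'k \<Rightarrow> ('a \<Rightarrow> 'a) \<Rightarrow> ('a \<Rightarrow> 'a) \<Rightarrow> 'a \<Rightarrow> 'a \<Rightarrow> 'a" where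
  "phi iota lam d P u v = P (d u * P v) - u * P v + P (u * v) + iota lam * P (d u * v)"

end

theory Submission
  imports Defs
begin

text \<open>Write \<open>\<psi> x = P (d x) - x\<close> (\<open>Pd_defect\<close> below). Since \<open>d \<circ> P = id\<close>,
  every \<open>\<psi> x\<close> is a constant, and the Leibniz rule gives \<open>\<phi>(u,v) = \<psi>(u P(v))\<close>. Substituting \<open>d x\<close> into the
  Rota--Baxter identity yields \<open>\<psi>(x) P(w) = P(\<psi>(x) w) + \<psi>(x P(w))\<close>; for
  \<open>x = u P(v)\<close> one expands \<open>P(v) P(w)\<close> once more by the Rota--Baxter identity and
  uses that \<psi> is additive and commutes with multiplication by \<open>\<lambda>\<close>.\<close>

definition Pd_defect :: "('a::comm_ring_1 \<Rightarrow> 'a) \<Rightarrow> ('a \<Rightarrow> 'a) \<Rightarrow> 'a \<Rightarrow> 'a" where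
  "Pd_defect d P x = P (d x) - x"

locale diff_RB =
  fixes iota :: "'k::comm_ring_1 \<Rightarrow> 'a::comm_ring_1" and lam :: 'k and d P :: "'a \<Rightarrow> 'a"
  assumes diff_RB_algebra: "diff_RB_algebra iota lam d P"
begin

lemma P_add: "P (a + b) = P a + P b"
  and P_scale: "P (iota lam * a) = iota lam * P a"
  and d_add: "d (a + b) = d a + d b"
  and d_scale: "d (iota lam * a) = iota lam * d a"
  and d_mult: "d (u * v) = d u * v + u * d v + iota lam * (d u * d v)"
  and rota_baxter: "P u * P v = P (u * P v) + P (P u * v) + iota lam * P (u * v)"
  and d_P: "d (P u) = u"
  using diff_RB_algebra unfolding diff_RB_algebra_def k_linear_def by auto

lemma d_diff: "d (a - b) = d a - d b"
  by (metis d_add diff_add_cancel eq_diff_eq)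

lemma Pd_defect_add: "Pd_defect d P (a + b) = Pd_defect d P a + Pd_defect d P b"
  unfolding Pd_defect_def by (simp add: d_add P_add)

lemma Pd_defect_scale: "Pd_defect d P (iota lam * a) = iota lam * Pd_defect d P a"
  unfolding Pd_defect_def by (simp add: d_scale P_scale right_diff_distrib)

lemma d_Pd_defect: "d (Pd_defect d P x) = 0"
  unfolding Pd_defect_def by (simp add: d_diff d_P)

lemma phi_eq_Pd_defect: "phi iota lam d P u v = Pd_defect d P (u * P v)"
  unfolding phi_def Pd_defect_def
  by (simp add: d_mult d_P P_add distrib_left mult.assoc P_scale[symmetric] del: P_scale)

lemma Pd_defect_mult_P:
  "Pd_defect d P x * P w = P (Pd_defect d P x * w) + Pd_defect d P (x * P w)"
proof -
  have "Pd_defect d P x * P w = P (d x) * P w - x * P w"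
    unfolding Pd_defect_def by (simp add: algebra_simps)
  also have "\<dots> = P (d x * P w) + P (P (d x) * w) + iota lam * P (d x * w) - x * P w"
    by (simp add: rota_baxter)
  also have "P (P (d x) * w) = P (Pd_defect d P x * w) + P (x * w)"
    unfolding Pd_defect_def by (simp add: P_add[symmetric] algebra_simps)
  finally show ?thesis
    unfolding Pd_defect_def
    by (simp add: d_mult d_P P_add distrib_left mult.assoc P_scale[symmetric] del: P_scale)
qed

lemma d_phi: "d (phi iota lam d P u v) = 0"
  by (simp add: phi_eq_Pd_defect d_Pd_defect)

lemma phi_mult_P:
  "phi iota lam d P u v * P w =
     P (phi iota lam d P u v * w) + phi iota lam d P u (w * P v)
     + phi iota lam d P u (v * P w) + iota lam * phi iota lam d P u (v * w)"
proof -
  have "phi iota lam d P u (w * P v) + phi iota lam d P u (v * P w) + iota lam * phi iota lam d P u (v * w)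
      = Pd_defect d P (u * (P v * P w))"
    by (simp add: phi_eq_Pd_defect Pd_defect_add[symmetric] Pd_defect_scale[symmetric]
        rota_baxter algebra_simps P_scale)
  then show ?thesis
    by (simp add: phi_eq_Pd_defect Pd_defect_mult_P mult.assoc add.assoc)
qed

end

theorem mainTheorem6:
  fixes iota :: "'k::comm_ring_1 \<Rightarrow> 'a::comm_ring_1"
    and lam :: 'k and d P :: "'a \<Rightarrow> 'a"
  assumes "diff_RB_algebra iota lam d P"
  shows "\<forall>u v w.
           d (phi iota lam d P u v) = 0 \<and>
           phi iota lam d P u v * P w =
             P (phi iota lam d P u v * w) + phi iota lam d P u (w * P v)
             + phi iota lam d P u (v * P w) + iota lam * phi iota lam d P u (v * w)"
proof -
  interpret diff_RB iota lam d P by (rule diff_RB.intro) (fact assms)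
  show ?thesis using d_phi phi_mult_P by blast
qed

end
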